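(* Any finite polyhedral complex $K$ in $\mathbb{R}^n$ is homotopy equivalent to a polyhedral complex $K'$ in $\mathbb{R}^n$ in which no cell contains a straight line, and $K$ and $K'$ have equal numbers of cells.
   Context: A polyhedral complex in $\mathbb{R}^n$ is a finite collection of closed convex polyhedra (cells), closed under taking faces, any two meeting in a common face; it is identified with the union of its cells. *)

theory Defs
  imports "HOL-Analysis.Analysis"
begin

definition polyhedral_complex :: "'a::euclidean_space set set \<Rightarrow> bool" where
  "polyhedral_complex K \<longleftrightarrow>
     finite K \<and>
     (\<forall>C\<in>K. polyhedron C \<and> C \<noteq> {}) \<and>
     (\<forall>C\<in>K. \<forall>F. F face_of C \<and> F \<noteq> {} \<longrightarrow> F \<in> K) \<and>
     (\<forall>C\<in>K. \<forall>D\<in>K. (C \<inter> D) face_of C \<and> (C \<inter> D) face_of D)"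

definition contains_line :: "'a::real_vector set \<Rightarrow> bool" where
  "contains_line C \<longleftrightarrow> (\<exists>a v. v \<noteq> 0 \<and> (\<forall>t::real. a + t *\<^sub>R v \<in> C))"

end

theory Submission
  imports Defs
begin

text \<open>The lineality space \<open>L\<close> of a closed convex set \<open>C\<close> (the directions of the lines
in \<open>C\<close>) splits \<open>C\<close> as the orthogonal sum of \<open>L\<close> and the pointed part \<open>C \<inter> L\<^sup>\<bottom>\<close>, which
contains no line. Nonempty faces of \<open>C\<close> have the same lineality space as \<open>C\<close>; hence so do any
two cells of a complex that meet. Consequently the pointed parts of the cells again form a
polyhedral complex, in bijection with the original one, and the cellwise orthogonal projections
onto \<open>L\<^sup>\<bottom>\<close> agree on overlaps and glue to a deformation retraction onto it along straight
segments.\<close>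

definition orthogonal_projection :: "'a::euclidean_space set \<Rightarrow> 'a \<Rightarrow> 'a" where
  "orthogonal_projection L x = (THE y. y \<in> L \<and> x - y \<in> L\<^sup>\<bottom>)"

lemma orthogonal_projection_unique:
  assumes "subspace L" "y \<in> L" "x - y \<in> L\<^sup>\<bottom>"
  shows "orthogonal_projection L x = y"
  unfolding orthogonal_projection_def
proof (rule the_equality)
  fix y' assume y': "y' \<in> L \<and> x - y' \<in> L\<^sup>\<bottom>"
  have "y' - y \<in> L"
    using assms y' by (meson subspace_diff)
  moreover have "y' - y = (x - y) - (x - y')"
    by simp
  then have "y' - y \<in> L\<^sup>\<bottom>"
    using assms y' by (metis subspace_diff subspace_orthogonal_comp)
  ultimately show "y' = y"
    using orthogonal_Int_0[OF assms(1)] by (metis IntI singletonD eq_iff_diff_eq_0)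
qed (use assms in blast)

lemma orthogonal_projection_decomp:
  assumes "subspace L"
  shows "orthogonal_projection L x \<in> L" "x - orthogonal_projection L x \<in> L\<^sup>\<bottom>"
proof -
  obtain y z where "y \<in> L" "z \<in> L\<^sup>\<bottom>" "x = y + z"
    using subspace_sum_orthogonal_comp[OF assms] set_plus_elim by (metis UNIV_I)
  then have "orthogonal_projection L x = y"
    by (intro orthogonal_projection_unique[OF assms]) simp_all
  with \<open>y \<in> L\<close> \<open>z \<in> L\<^sup>\<bottom>\<close> \<open>x = y + z\<close>
  show "orthogonal_projection L x \<in> L" "x - orthogonal_projection L x \<in> L\<^sup>\<bottom>"
    by simp_all
qed

lemma orthogonal_projection_id: "subspace L \<Longrightarrow> x \<in> L \<Longrightarrow> orthogonal_projection L x = x"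
  by (rule orthogonal_projection_unique) (simp_all add: subspace_orthogonal_comp subspace_0)

lemma linear_orthogonal_projection:
  assumes "subspace L"
  shows "linear (orthogonal_projection L)"
proof
  fix x y
  show "orthogonal_projection L (x + y) = orthogonal_projection L x + orthogonal_projection L y"
  proof (rule orthogonal_projection_unique[OF assms])
    show "orthogonal_projection L x + orthogonal_projection L y \<in> L"
      by (intro subspace_add orthogonal_projection_decomp(1) assms)
    show "x + y - (orthogonal_projection L x + orthogonal_projection L y) \<in> L\<^sup>\<bottom>"
      unfolding add_diff_add
      by (intro subspace_add subspace_orthogonal_comp orthogonal_projection_decomp(2) assms)
  qed
next
  fix c x
  show "orthogonal_projection L (c *\<^sub>R x) = c *\<^sub>R orthogonal_projection L x"
  proof (rule orthogonal_projection_unique[OF assms])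
    show "c *\<^sub>R orthogonal_projection L x \<in> L"
      by (intro subspace_scale orthogonal_projection_decomp(1) assms)
    show "c *\<^sub>R x - c *\<^sub>R orthogonal_projection L x \<in> L\<^sup>\<bottom>"
      unfolding scaleR_diff_right[symmetric]
      by (intro subspace_scale subspace_orthogonal_comp orthogonal_projection_decomp(2) assms)
  qed
qed

definition lineality_space :: "'a::real_vector set \<Rightarrow> 'a set" where
  "lineality_space C = {v. \<forall>x\<in>C. \<forall>t::real. x + t *\<^sub>R v \<in> C}"

lemma mem_lineality_spaceD: "v \<in> lineality_space C \<Longrightarrow> x \<in> C \<Longrightarrow> x + t *\<^sub>R v \<in> C"
  by (simp add: lineality_space_def)

lemma subspace_lineality_space: "subspace (lineality_space C)"
  unfolding subspace_def
proof (intro conjI ballI allI)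
  show "0 \<in> lineality_space C"
    by (simp add: lineality_space_def)
next
  fix v w assume "v \<in> lineality_space C" "w \<in> lineality_space C"
  then have "x + t *\<^sub>R v + t *\<^sub>R w \<in> C" if "x \<in> C" for x t
    using that by (blast intro: mem_lineality_spaceD)
  then show "v + w \<in> lineality_space C"
    by (simp add: lineality_space_def scaleR_add_right add.assoc)
next
  fix c :: real and v assume "v \<in> lineality_space C"
  then have "x + (t * c) *\<^sub>R v \<in> C" if "x \<in> C" for x t
    using that by (blast intro: mem_lineality_spaceD)
  then show "c *\<^sub>R v \<in> lineality_space C"
    by (simp add: lineality_space_def)
qed

lemma line_subset_imp_mem_lineality_space:
  fixes C :: "'a::real_normed_vector set"
  assumes "closed C" "convex C" "y \<in> C" "\<And>t. y + t *\<^sub>R v \<in> C"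
  shows "v \<in> lineality_space C"
  unfolding lineality_space_def
proof (intro CollectI ballI allI)
  fix x t assume "x \<in> C"
  define \<epsilon> where "\<epsilon> n = inverse (real (Suc n))" for n
  have "(1 - \<epsilon> n) *\<^sub>R x + \<epsilon> n *\<^sub>R (y + (t / \<epsilon> n) *\<^sub>R v) \<in> C" for n
    using \<open>x \<in> C\<close> assms(4) by (intro convexD[OF assms(2)]) (simp_all add: \<epsilon>_def inverse_le_1_iff)
  moreover have "(1 - \<epsilon> n) *\<^sub>R x + \<epsilon> n *\<^sub>R (y + (t / \<epsilon> n) *\<^sub>R v) = x + t *\<^sub>R v + \<epsilon> n *\<^sub>R (y - x)" for n
    by (simp add: \<epsilon>_def algebra_simps)
  ultimately have "x + t *\<^sub>R v + \<epsilon> n *\<^sub>R (y - x) \<in> C" for n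
    by simp
  moreover have "(\<lambda>n. x + t *\<^sub>R v + \<epsilon> n *\<^sub>R (y - x)) \<longlonglongrightarrow> x + t *\<^sub>R v"
    using tendsto_add[OF tendsto_const tendsto_scaleR[OF LIMSEQ_inverse_real_of_nat tendsto_const]]
    by (simp add: \<epsilon>_def)
  ultimately show "x + t *\<^sub>R v \<in> C"
    by (rule closed_sequentially[OF \<open>closed C\<close>])
qed

lemma in_open_segment_symmetric:
  fixes x w :: "'a::real_normed_vector"
  assumes "w \<noteq> 0"
  shows "x \<in> open_segment (x - w) (x + w)"
proof -
  have "x - w \<noteq> x + w"
    using assms by (metis add_left_cancel diff_conv_add_uminus eq_neg_iff_add_eq_0 scaleR_2 scaleR_eq_0_iff zero_neq_numeral)
  moreover have "midpoint (x - w) (x + w) = x"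
    by (simp add: midpoint_eq_iff)
  ultimately show ?thesis
    using midpoint_in_open_segment by metis
qed

lemma lineality_space_face_of:
  fixes C :: "'a::real_normed_vector set"
  assumes "F face_of C" "F \<noteq> {}" "closed C" "convex C"
  shows "lineality_space F = lineality_space C"
proof
  obtain y where "y \<in> F"
    using assms(2) by blast
  have "F \<subseteq> C"
    using assms(1) by (rule face_of_imp_subset)
  show "lineality_space F \<subseteq> lineality_space C"
  proof
    fix v assume "v \<in> lineality_space F"
    then have "y + t *\<^sub>R v \<in> C" for t
      using \<open>y \<in> F\<close> \<open>F \<subseteq> C\<close> mem_lineality_spaceD by blast
    then show "v \<in> lineality_space C"
      using \<open>y \<in> F\<close> \<open>F \<subseteq> C\<close> assms(3,4) line_subset_imp_mem_lineality_space by blast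
  qed
  show "lineality_space C \<subseteq> lineality_space F"
    unfolding lineality_space_def
  proof (intro subsetI CollectI ballI allI)
    fix v x t assume "v \<in> {v. \<forall>x\<in>C. \<forall>t::real. x + t *\<^sub>R v \<in> C}" and "x \<in> F"
    then have "x + (- t) *\<^sub>R v \<in> C" "x + t *\<^sub>R v \<in> C"
      using \<open>F \<subseteq> C\<close> by blast+
    then have "x - t *\<^sub>R v \<in> C" "x + t *\<^sub>R v \<in> C"
      by simp_all
    show "x + t *\<^sub>R v \<in> F"
    proof (cases "t *\<^sub>R v = 0")
      case True
      then show ?thesis
        using \<open>x \<in> F\<close> by (simp only: True add.right_neutral)
    next
      case False
      then have "x \<in> open_segment (x - t *\<^sub>R v) (x + t *\<^sub>R v)"
        by (rule in_open_segment_symmetric)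
      then show ?thesis
        using face_ofD[OF assms(1) _ _ _ \<open>x \<in> F\<close>] \<open>x - t *\<^sub>R v \<in> C\<close> \<open>x + t *\<^sub>R v \<in> C\<close> by blast
    qed
  qed
qed

lemma face_of_linear_vimage:
  assumes "linear f" "convex S" "f ` S \<subseteq> T" "F face_of T"
  shows "(S \<inter> f -` F) face_of S"
  unfolding face_of_def
proof (intro conjI ballI impI)
  show "S \<inter> f -` F \<subseteq> S"
    by blast
  show "convex (S \<inter> f -` F)"
    by (intro convex_Int assms(2) convex_linear_vimage assms(1) face_of_imp_convex[OF assms(4)])
next
  fix a b x assume ab: "a \<in> S" "b \<in> S" and x: "x \<in> S \<inter> f -` F" "x \<in> open_segment a b"
  then obtain u where u: "0 < u" "u < 1" and "x = (1 - u) *\<^sub>R a + u *\<^sub>R b"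
    by (auto simp: in_segment)
  then have fx: "f x = (1 - u) *\<^sub>R f a + u *\<^sub>R f b"
    by (simp add: linear_add[OF assms(1)] linear_scale[OF assms(1)])
  have "f a \<in> F \<and> f b \<in> F"
  proof (cases "f a = f b")
    case True
    then have "f x = f a"
      by (simp add: fx flip: scaleR_add_left)
    with True x show ?thesis
      by simp
  next
    case False
    then have "f x \<in> open_segment (f a) (f b)"
      using u fx by (auto simp: in_segment)
    then show ?thesis
      using face_ofD[OF assms(4)] x ab assms(3) by blast
  qed
  with ab show "a \<in> S \<inter> f -` F" "b \<in> S \<inter> f -` F"
    by simp_all
qed

definition pointed_projection :: "'a::euclidean_space set \<Rightarrow> 'a \<Rightarrow> 'a" where
  "pointed_projection C = orthogonal_projection ((lineality_space C)\<^sup>\<bottom>)"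

definition pointed_part :: "'a::euclidean_space set \<Rightarrow> 'a set" where
  "pointed_part C = C \<inter> (lineality_space C)\<^sup>\<bottom>"

lemma linear_pointed_projection: "linear (pointed_projection C)"
  unfolding pointed_projection_def
  by (intro linear_orthogonal_projection subspace_orthogonal_comp)

lemma pointed_projection_in_orthogonal_comp: "pointed_projection C x \<in> (lineality_space C)\<^sup>\<bottom>"
  unfolding pointed_projection_def
  by (intro orthogonal_projection_decomp(1) subspace_orthogonal_comp)

lemma diff_pointed_projection_in_lineality_space: "x - pointed_projection C x \<in> lineality_space C"
  using orthogonal_projection_decomp(2)[OF subspace_orthogonal_comp[of "lineality_space C"], of x]
  unfolding pointed_projection_def orthogonal_comp_self[OF subspace_lineality_space] .

lemma pointed_projection_id: "x \<in> (lineality_space C)\<^sup>\<bottom> \<Longrightarrow> pointed_projection C x = x"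
  unfolding pointed_projection_def
  by (intro orthogonal_projection_id subspace_orthogonal_comp)

lemma pointed_projection_cong:
  "lineality_space C = lineality_space D \<Longrightarrow> pointed_projection C = pointed_projection D"
  unfolding pointed_projection_def by (rule arg_cong)

lemma pointed_projection_mem_iff: "pointed_projection C x \<in> C \<longleftrightarrow> x \<in> C"
proof -
  let ?w = "x - pointed_projection C x"
  have "pointed_projection C x = x + (- 1) *\<^sub>R ?w" "x = pointed_projection C x + 1 *\<^sub>R ?w"
    by simp_all
  then show ?thesis
    using mem_lineality_spaceD[OF diff_pointed_projection_in_lineality_space] by metis
qed

lemma pointed_projection_in_pointed_part: "x \<in> C \<Longrightarrow> pointed_projection C x \<in> pointed_part C"
  unfolding pointed_part_def using pointed_projection_mem_iff pointed_projection_in_orthogonal_comp by blast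

lemma pointed_part_subset: "pointed_part C \<subseteq> C"
  by (simp add: pointed_part_def)

lemma pointed_part_eq_empty_iff: "pointed_part C = {} \<longleftrightarrow> C = {}"
  using pointed_projection_in_pointed_part pointed_part_subset by blast

lemma polyhedron_pointed_part: "polyhedron C \<Longrightarrow> polyhedron (pointed_part C)"
  unfolding pointed_part_def
  by (erule polyhedron_Int[OF _ affine_imp_polyhedron[OF subspace_imp_affine[OF subspace_orthogonal_comp]]])

lemma eq_if_pointed_part_eq:
  assumes "lineality_space C = lineality_space D" "pointed_part C = pointed_part D"
  shows "C = D"
proof -
  have mem_iff: "x \<in> C \<longleftrightarrow> pointed_projection C x \<in> pointed_part C" for C :: "'a set" and x
    unfolding pointed_part_def using pointed_projection_mem_iff pointed_projection_in_orthogonal_comp by blast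
  have "pointed_projection C = pointed_projection D"
    using assms(1) by (rule pointed_projection_cong)
  then have "x \<in> C \<longleftrightarrow> x \<in> D" for x
    by (simp only: mem_iff[of x C] mem_iff[of x D] assms(2))
  then show ?thesis
    by (rule set_eqI)
qed

lemma not_contains_line_pointed_part:
  assumes "closed C" "convex C"
  shows "\<not> contains_line (pointed_part C)"
proof
  assume "contains_line (pointed_part C)"
  then obtain a v where "v \<noteq> 0" and line: "\<And>t. a + t *\<^sub>R v \<in> pointed_part C"
    by (auto simp: contains_line_def)
  then have "v \<in> lineality_space C"
    using line[of 0] pointed_part_subset assms
    by (intro line_subset_imp_mem_lineality_space[of C a]) auto
  moreover have "(a + 1 *\<^sub>R v) - (a + 0 *\<^sub>R v) \<in> (lineality_space C)\<^sup>\<bottom>"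
    using line[of 0] line[of 1]
    by (intro subspace_diff subspace_orthogonal_comp) (auto simp: pointed_part_def)
  ultimately have "v \<in> lineality_space C \<inter> (lineality_space C)\<^sup>\<bottom>"
    by simp
  with \<open>v \<noteq> 0\<close> show False
    using orthogonal_Int_0[OF subspace_lineality_space] by blast
qed

lemma face_of_pointed_part_imp:
  assumes "closed C" "convex C" "F' face_of pointed_part C" "F' \<noteq> {}"
  obtains F where "F face_of C" "F \<noteq> {}" "F' = pointed_part F"
proof
  let ?F = "C \<inter> pointed_projection C -` F'"
  have "pointed_projection C ` C \<subseteq> pointed_part C"
    using pointed_projection_in_pointed_part by blast
  then show "?F face_of C"
    by (rule face_of_linear_vimage[OF linear_pointed_projection assms(2) _ assms(3)])
  have F'_sub: "F' \<subseteq> pointed_part C"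
    using assms(3) by (rule face_of_imp_subset)
  then have F'_fixed: "pointed_projection C x = x" if "x \<in> F'" for x
    using that by (auto simp: pointed_part_def intro: pointed_projection_id)
  then show "?F \<noteq> {}"
    using assms(4) F'_sub pointed_part_subset by blast
  then have "lineality_space ?F = lineality_space C"
    by (rule lineality_space_face_of[OF \<open>?F face_of C\<close> _ assms(1,2)])
  then show "F' = pointed_part ?F"
    using F'_sub F'_fixed by (auto simp: pointed_part_def pointed_projection_id)
qed

lemma pointed_part_Int_face_of:
  assumes "(C \<inter> D) face_of C" "lineality_space C = lineality_space D"
  shows "(pointed_part C \<inter> pointed_part D) face_of pointed_part C"
proof -
  have "pointed_part C \<inter> pointed_part D = (C \<inter> D) \<inter> (lineality_space C)\<^sup>\<bottom>"
    unfolding pointed_part_def assms(2) by blast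
  then show ?thesis
    unfolding pointed_part_def
    using face_of_slice[OF assms(1) subspace_imp_convex[OF subspace_orthogonal_comp]] by simp
qed

lemma polyhedral_complexD:
  assumes "polyhedral_complex K"
  shows "finite K"
    and "C \<in> K \<Longrightarrow> polyhedron C"
    and "C \<in> K \<Longrightarrow> C \<noteq> {}"
    and "C \<in> K \<Longrightarrow> F face_of C \<Longrightarrow> F \<noteq> {} \<Longrightarrow> F \<in> K"
    and "C \<in> K \<Longrightarrow> D \<in> K \<Longrightarrow> (C \<inter> D) face_of C"
  using assms unfolding polyhedral_complex_def by blast+

lemma
  assumes "polyhedral_complex K" "C \<in> K"
  shows polyhedral_complex_closed: "closed C" and polyhedral_complex_convex: "convex C"
  using polyhedral_complexD(2)[OF assms] polyhedron_imp_closed polyhedron_imp_convex by blast+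

lemma polyhedral_complex_lineality_space_eq:
  assumes K: "polyhedral_complex K" and "C \<in> K" "D \<in> K" "C \<inter> D \<noteq> {}"
  shows "lineality_space C = lineality_space D"
proof -
  have "lineality_space (C \<inter> D) = lineality_space C"
    using polyhedral_complexD(5)[OF K \<open>C \<in> K\<close> \<open>D \<in> K\<close>] \<open>C \<inter> D \<noteq> {}\<close>
      polyhedral_complex_closed[OF K \<open>C \<in> K\<close>] polyhedral_complex_convex[OF K \<open>C \<in> K\<close>]
    by (rule lineality_space_face_of)
  moreover have "lineality_space (D \<inter> C) = lineality_space D"
    using polyhedral_complexD(5)[OF K \<open>D \<in> K\<close> \<open>C \<in> K\<close>] \<open>C \<inter> D \<noteq> {}\<close>
      polyhedral_complex_closed[OF K \<open>D \<in> K\<close>] polyhedral_complex_convex[OF K \<open>D \<in> K\<close>]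
    by (simp add: Int_commute lineality_space_face_of)
  ultimately show ?thesis
    by (simp add: Int_commute)
qed

lemma polyhedral_complex_pointed_part_Int_face_of:
  assumes K: "polyhedral_complex K" and "C \<in> K" "D \<in> K"
  shows "(pointed_part C \<inter> pointed_part D) face_of pointed_part C"
proof (cases "C \<inter> D = {}")
  case True
  then have "pointed_part C \<inter> pointed_part D = {}"
    using pointed_part_subset by blast
  then show ?thesis
    by simp
next
  case False
  then have "lineality_space C = lineality_space D"
    by (rule polyhedral_complex_lineality_space_eq[OF K \<open>C \<in> K\<close> \<open>D \<in> K\<close>])
  with polyhedral_complexD(5)[OF K \<open>C \<in> K\<close> \<open>D \<in> K\<close>] show ?thesis
    by (rule pointed_part_Int_face_of)
qed

lemma polyhedral_complex_pointed_parts: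
  assumes K: "polyhedral_complex K"
  shows "polyhedral_complex (pointed_part ` K)"
  unfolding polyhedral_complex_def
proof (intro conjI ballI allI impI)
  show "finite (pointed_part ` K)"
    using polyhedral_complexD(1)[OF K] by simp
next
  fix C' assume "C' \<in> pointed_part ` K"
  then obtain C where "C \<in> K" "C' = pointed_part C"
    by blast
  then show "polyhedron C'" "C' \<noteq> {}"
    using polyhedral_complexD(2,3)[OF K \<open>C \<in> K\<close>]
    by (simp_all add: polyhedron_pointed_part pointed_part_eq_empty_iff)
next
  fix C' F' assume "C' \<in> pointed_part ` K" and F': "F' face_of C' \<and> F' \<noteq> {}"
  then obtain C where "C \<in> K" "C' = pointed_part C"
    by blast
  moreover note polyhedral_complex_closed[OF K \<open>C \<in> K\<close>] polyhedral_complex_convex[OF K \<open>C \<in> K\<close>]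
  ultimately obtain F where "F face_of C" "F \<noteq> {}" "F' = pointed_part F"
    using F' face_of_pointed_part_imp by metis
  then show "F' \<in> pointed_part ` K"
    using polyhedral_complexD(4)[OF K \<open>C \<in> K\<close>] by blast
next
  fix C' D' assume "C' \<in> pointed_part ` K" "D' \<in> pointed_part ` K"
  then show "(C' \<inter> D') face_of C'" "(C' \<inter> D') face_of D'"
    using polyhedral_complex_pointed_part_Int_face_of[OF K] by (metis Int_commute imageE)+
qed

lemma inj_on_pointed_part:
  assumes K: "polyhedral_complex K"
  shows "inj_on pointed_part K"
proof
  fix C D assume "C \<in> K" "D \<in> K" and eq: "pointed_part C = pointed_part D"
  have "pointed_part C \<noteq> {}"
    using polyhedral_complexD(3)[OF K \<open>C \<in> K\<close>] pointed_part_eq_empty_iff by blast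
  then have "C \<inter> D \<noteq> {}"
    using eq pointed_part_subset by blast
  then have "lineality_space C = lineality_space D"
    by (rule polyhedral_complex_lineality_space_eq[OF K \<open>C \<in> K\<close> \<open>D \<in> K\<close>])
  then show "C = D"
    using eq by (rule eq_if_pointed_part_eq)
qed

text \<open>Any cell containing \<open>x\<close> may be chosen: cells sharing a point have the same lineality space.\<close>
definition pointed_retraction :: "'a::euclidean_space set set \<Rightarrow> 'a \<Rightarrow> 'a" where
  "pointed_retraction K x = pointed_projection (SOME C. C \<in> K \<and> x \<in> C) x"

lemma pointed_retraction_eq:
  assumes K: "polyhedral_complex K" and "C \<in> K" "x \<in> C"
  shows "pointed_retraction K x = pointed_projection C x"
proof -
  let ?D = "SOME C. C \<in> K \<and> x \<in> C"
  have D: "?D \<in> K" "x \<in> ?D"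
    using someI_ex[of "\<lambda>C. C \<in> K \<and> x \<in> C"] assms(2,3) by blast+
  then have "?D \<inter> C \<noteq> {}"
    using \<open>x \<in> C\<close> by blast
  then have "lineality_space ?D = lineality_space C"
    by (rule polyhedral_complex_lineality_space_eq[OF K D(1) \<open>C \<in> K\<close>])
  then have "pointed_projection ?D = pointed_projection C"
    by (rule pointed_projection_cong)
  then show ?thesis
    by (simp add: pointed_retraction_def)
qed

lemma continuous_on_pointed_retraction:
  assumes K: "polyhedral_complex K"
  shows "continuous_on (\<Union>K) (pointed_retraction K)"
proof -
  have "continuous_on (\<Union>C\<in>K. C) (pointed_retraction K)"
  proof (rule continuous_on_closed_Union[OF polyhedral_complexD(1)[OF K] polyhedral_complex_closed[OF K]])
    fix C assume "C \<in> K"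
    have "continuous_on C (pointed_projection C)"
      by (rule linear_continuous_on[OF linear_pointed_projection[unfolded linear_conv_bounded_linear]])
    then show "continuous_on C (pointed_retraction K)"
      by (rule continuous_on_eq) (simp add: pointed_retraction_eq[OF K \<open>C \<in> K\<close>])
  qed
  then show ?thesis
    by simp
qed

lemma retraction_pointed_retraction:
  assumes K: "polyhedral_complex K"
  shows "retraction (\<Union>K) (\<Union>(pointed_part ` K)) (pointed_retraction K)"
  unfolding retraction_def
proof (intro conjI ballI continuous_on_pointed_retraction[OF K])
  show "\<Union>(pointed_part ` K) \<subseteq> \<Union>K"
    using pointed_part_subset by blast
  show "pointed_retraction K \<in> \<Union>K \<rightarrow> \<Union>(pointed_part ` K)"
  proof
    fix x assume "x \<in> \<Union>K"
    then obtain C where "C \<in> K" "x \<in> C"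
      by blast
    then have "pointed_retraction K x \<in> pointed_part C"
      by (simp only: pointed_retraction_eq[OF K] pointed_projection_in_pointed_part)
    with \<open>C \<in> K\<close> show "pointed_retraction K x \<in> \<Union>(pointed_part ` K)"
      by blast
  qed
next
  fix x assume "x \<in> \<Union>(pointed_part ` K)"
  then obtain C where "C \<in> K" "x \<in> C" "x \<in> (lineality_space C)\<^sup>\<bottom>"
    by (auto simp: pointed_part_def)
  then show "pointed_retraction K x = x"
    by (simp only: pointed_retraction_eq[OF K] pointed_projection_id)
qed

lemma homotopic_id_pointed_retraction:
  assumes K: "polyhedral_complex K"
  shows "homotopic_with_canon (\<lambda>x. True) (\<Union>K) (\<Union>K) id (pointed_retraction K)"
proof (rule homotopic_with_linear[OF continuous_on_id' continuous_on_pointed_retraction[OF K]])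
  fix x assume "x \<in> \<Union>K"
  then obtain C where "C \<in> K" "x \<in> C"
    by blast
  then have "pointed_retraction K x \<in> C"
    by (simp only: pointed_retraction_eq[OF K] pointed_projection_mem_iff)
  then have "closed_segment x (pointed_retraction K x) \<subseteq> C"
    using closed_segment_subset polyhedral_complex_convex[OF K \<open>C \<in> K\<close>] \<open>x \<in> C\<close> by blast
  then show "closed_segment (id x) (pointed_retraction K x) \<subseteq> \<Union>K"
    using \<open>C \<in> K\<close> by auto
qed

theorem lemma4p5:
  fixes K :: "'a::euclidean_space set set"
  assumes "polyhedral_complex K"
  shows "\<exists>K'::'a set set. polyhedral_complex K' \<and> (\<forall>C\<in>K'. \<not> contains_line C) \<and>
           (\<Union>K) homotopy_eqv (\<Union>K') \<and> card K' = card K"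
proof (intro exI conjI ballI)
  show "polyhedral_complex (pointed_part ` K)"
    using assms by (rule polyhedral_complex_pointed_parts)
  show "(\<Union>K) homotopy_eqv (\<Union>(pointed_part ` K))"
    using homotopic_id_pointed_retraction[OF assms] retraction_pointed_retraction[OF assms]
    by (rule deformation_retract_imp_homotopy_eqv)
  show "card (pointed_part ` K) = card K"
    using assms by (intro card_image inj_on_pointed_part)
next
  fix C' assume "C' \<in> pointed_part ` K"
  then obtain C where "C \<in> K" "C' = pointed_part C"
    by blast
  then show "\<not> contains_line C'"
    using polyhedral_complex_closed[OF assms] polyhedral_complex_convex[OF assms]
      not_contains_line_pointed_part by blast
qed

end
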